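(* Let $(X,\tau)$ be a $T_0$ space and $\mathcal{F}$ a directed family of nonempty finite subsets of $X$. If $x\in U\in\tau_{SI_2}(X)$ and $\bigcap_{F\in\mathcal{F}}\uparrow F\subseteq\uparrow x$, then $F\subseteq U$ for some $F\in\mathcal{F}$.
   Context: For a $T_0$ space $(X,\tau)$, the specialization order is $y\le x$ iff $y\in\operatorname{cl}(\{x\})$; all order notions refer to it. For $A\subseteq X$: $\uparrow A=\{x: a\le x \text{ for some } a\in A\}$, $A^{\uparrow}$ is the set of upper bounds of $A$, $A^{\downarrow}$ the set of lower bounds, and $A^{\delta}=(A^{\uparrow})^{\downarrow}$. A nonempty $E\subseteq X$ is irreducible if whenever $E\subseteq B\cup C$ with $B,C$ closed, then $E\subseteq B$ or $E\subseteq C$. A nonempty family $\mathcal{G}$ of subsets of $X$ is directed if for $G_1,G_2\in\mathcal{G}$ there is $G\in\mathcal{G}$ with $G\subseteq\uparrow G_1\cap\uparrow G_2$. A set $U\subseteq X$ is weakly irreducibly open if $U\in\tau$ and for every irreducible $E\subseteq X$, $E^{\delta}\cap U\neq\emptyset$ implies $E\cap U\neq\emptyset$; these form the topology $\tau_{SI_2}(X)$. *)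

theory Defs
  imports "HOL-Analysis.Analysis"
begin

definition spec_le :: "'a topology \<Rightarrow> 'a \<Rightarrow> 'a \<Rightarrow> bool" where
  "spec_le X y x \<longleftrightarrow> x \<in> topspace X \<and> y \<in> X closure_of {x}"

definition upset :: "'a topology \<Rightarrow> 'a set \<Rightarrow> 'a set" where
  "upset X A = {x \<in> topspace X. \<exists>a\<in>A. spec_le X a x}"

definition upper_bounds :: "'a topology \<Rightarrow> 'a set \<Rightarrow> 'a set" where
  "upper_bounds X A = {x \<in> topspace X. \<forall>a\<in>A. spec_le X a x}"

definition lower_bounds :: "'a topology \<Rightarrow> 'a set \<Rightarrow> 'a set" where
  "lower_bounds X A = {x \<in> topspace X. \<forall>a\<in>A. spec_le X x a}"

definition delta_set :: "'a topology \<Rightarrow> 'a set \<Rightarrow> 'a set" where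
  "delta_set X A = lower_bounds X (upper_bounds X A)"

definition irreducible_set :: "'a topology \<Rightarrow> 'a set \<Rightarrow> bool" where
  "irreducible_set X E \<longleftrightarrow> E \<noteq> {} \<and> E \<subseteq> topspace X \<and>
     (\<forall>B C. closedin X B \<longrightarrow> closedin X C \<longrightarrow> E \<subseteq> B \<union> C \<longrightarrow> E \<subseteq> B \<or> E \<subseteq> C)"

definition directed_family :: "'a topology \<Rightarrow> 'a set set \<Rightarrow> bool" where
  "directed_family X \<G> \<longleftrightarrow> \<G> \<noteq> {} \<and>
     (\<forall>G1\<in>\<G>. \<forall>G2\<in>\<G>. \<exists>G\<in>\<G>. G \<subseteq> upset X G1 \<inter> upset X G2)"

definition weakly_irreducibly_open :: "'a topology \<Rightarrow> 'a set \<Rightarrow> bool" where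
  "weakly_irreducibly_open X U \<longleftrightarrow> openin X U \<and>
     (\<forall>E. irreducible_set X E \<longrightarrow> delta_set X E \<inter> U \<noteq> {} \<longrightarrow> E \<inter> U \<noteq> {})"

end

theory Submission
  imports Defs
begin

text \<open>If no member of \<open>\<F>\<close> lies inside \<open>U\<close>, Zorn's lemma gives a minimal closed set \<open>A\<close> meeting
  every \<open>F - U\<close>. Minimality forces \<open>A \<inter> U = {}\<close>, and together with directedness of \<open>\<F>\<close> it makes
  \<open>A\<close> irreducible. Every upper bound of \<open>A\<close> lies in each \<open>\<up>F\<close>, hence above \<open>x\<close>, so
  \<open>x \<in> A\<^sup>\<delta> \<inter> U\<close>; weak irreducible openness of \<open>U\<close> then yields a point of \<open>A \<inter> U\<close>.\<close>

lemma spec_le_openin_mem: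
  assumes "openin X U" "spec_le X a b" "a \<in> U"
  shows "b \<in> U"
proof (rule ccontr)
  assume "b \<notin> U"
  then have "X closure_of {b} \<subseteq> topspace X - U"
    using assms(1,2) by (intro closure_of_minimal) (auto simp: spec_le_def)
  then show False
    using assms(2,3) by (auto simp: spec_le_def)
qed

lemma spec_le_closedin_mem:
  assumes "closedin X D" "spec_le X a b" "b \<in> D"
  shows "a \<in> D"
  using assms closure_of_minimal[of "{b}" D X] by (auto simp: spec_le_def)

lemma upper_bounds_subset_upset:
  assumes "A \<inter> F \<noteq> {}"
  shows "upper_bounds X A \<subseteq> upset X F"
  using assms by (auto simp: upper_bounds_def upset_def)

lemma mem_delta_set_iff:
  "x \<in> delta_set X A \<longleftrightarrow> x \<in> topspace X \<and> upper_bounds X A \<subseteq> upset X {x}"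
  by (auto simp: delta_set_def lower_bounds_def upset_def upper_bounds_def)

lemma closedin_meets_lower_outside_openin:
  assumes "closedin X D" "openin X U" "g \<in> D - U" "g \<in> upset X F"
  shows "D \<inter> (F - U) \<noteq> {}"
proof -
  obtain f where f: "f \<in> F" "spec_le X f g"
    using assms(4) by (auto simp: upset_def)
  have "f \<in> D"
    using spec_le_closedin_mem[OF assms(1) f(2)] assms(3) by blast
  moreover have "f \<notin> U"
    using spec_le_openin_mem[OF assms(2) f(2)] assms(3) by blast
  ultimately show ?thesis
    using f(1) by blast
qed

lemma exists_minimal_closedin_meeting_finite_sets:
  assumes "\<forall>i\<in>I. finite (K i) \<and> K i \<noteq> {} \<and> K i \<subseteq> topspace X"
  obtains A where "closedin X A" "\<forall>i\<in>I. A \<inter> K i \<noteq> {}"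
    "\<And>B. closedin X B \<Longrightarrow> B \<subseteq> A \<Longrightarrow> \<forall>i\<in>I. B \<inter> K i \<noteq> {} \<Longrightarrow> B = A"
proof -
  define \<O> where "\<O> = {V. openin X V \<and> (\<forall>i\<in>I. (topspace X - V) \<inter> K i \<noteq> {})}"
  have "\<Union>\<C> \<in> \<O>" if "\<C> \<in> chains \<O>" for \<C>
  proof -
    have "(topspace X - \<Union>\<C>) \<inter> K i \<noteq> {}" if i: "i \<in> I" for i
    proof
      assume "(topspace X - \<Union>\<C>) \<inter> K i = {}"
      then have "K i \<subseteq> \<Union>\<C>" "\<C> \<noteq> {}"
        using assms i by auto
      then obtain V where "V \<in> \<C>" "K i \<subseteq> V"
        using finite_subset_Union_chain[of "K i" \<C> \<O>] assms i \<open>\<C> \<in> chains \<O>\<close>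
        by (auto simp: chains_alt_def)
      then show False
        using i \<open>\<C> \<in> chains \<O>\<close> by (auto simp: \<O>_def chains_def)
    qed
    then show ?thesis
      using \<open>\<C> \<in> chains \<O>\<close> by (auto simp: \<O>_def chains_def)
  qed
  then obtain V where V: "V \<in> \<O>" and max: "\<And>W. W \<in> \<O> \<Longrightarrow> V \<subseteq> W \<Longrightarrow> W = V"
    using Zorn_Lemma[of \<O>] by blast
  show thesis
  proof
    show "closedin X (topspace X - V)" "\<forall>i\<in>I. (topspace X - V) \<inter> K i \<noteq> {}"
      using V by (auto simp: \<O>_def)
  next
    fix B assume B: "closedin X B" "B \<subseteq> topspace X - V" "\<forall>i\<in>I. B \<inter> K i \<noteq> {}"
    then have "topspace X - B \<in> \<O>"
      by (auto simp: \<O>_def closedin_def Diff_Diff_Int inf.absorb2)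
    moreover have "V \<subseteq> topspace X - B"
      using V B(2) by (auto simp: \<O>_def dest: openin_subset)
    ultimately have "topspace X - B = V"
      using max by blast
    then show "B = topspace X - V"
      using closedin_subset[OF B(1)] by blast
  qed
qed

lemma irreducible_minimal_closedin_meeting_diff:
  assumes U: "openin X U" and dir: "directed_family X \<F>"
    and A: "closedin X A" and meet: "\<forall>F\<in>\<F>. A \<inter> (F - U) \<noteq> {}"
    and min: "\<And>B. closedin X B \<Longrightarrow> B \<subseteq> A \<Longrightarrow> \<forall>F\<in>\<F>. B \<inter> (F - U) \<noteq> {} \<Longrightarrow> B = A"
  shows "irreducible_set X A"
  unfolding irreducible_set_def
proof (intro conjI allI impI)
  show "A \<noteq> {}"
    using dir meet by (auto simp: directed_family_def)
  show "A \<subseteq> topspace X"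
    using A closedin_subset by blast
next
  fix B C assume B: "closedin X B" and C: "closedin X C" and cover: "A \<subseteq> B \<union> C"
  have separating: "\<exists>F\<in>\<F>. A \<inter> D \<inter> (F - U) = {}" if "closedin X D" "\<not> A \<subseteq> D" for D
    using min[of "A \<inter> D"] that A by blast
  show "A \<subseteq> B \<or> A \<subseteq> C"
  proof (rule ccontr)
    assume "\<not> (A \<subseteq> B \<or> A \<subseteq> C)"
    then obtain F1 F2 where F1: "F1 \<in> \<F>" "A \<inter> B \<inter> (F1 - U) = {}"
      and F2: "F2 \<in> \<F>" "A \<inter> C \<inter> (F2 - U) = {}"
      using separating B C by meson
    obtain G where G: "G \<in> \<F>" "G \<subseteq> upset X F1 \<inter> upset X F2"
      using dir F1(1) F2(1) unfolding directed_family_def by blast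
    obtain g where g: "g \<in> A" "g \<in> G - U"
      using meet G(1) by blast
    have "g \<in> A \<inter> B \<or> g \<in> A \<inter> C"
      using cover g(1) by blast
    then show False
      using closedin_meets_lower_outside_openin[of X "A \<inter> B" U g F1]
        closedin_meets_lower_outside_openin[of X "A \<inter> C" U g F2]
        A B C U F1(2) F2(2) G(2) g(2) by blast
  qed
qed

theorem proposition4p1:
  fixes X :: "'a topology" and \<F> :: "'a set set" and U :: "'a set" and x :: 'a
  assumes "t0_space X"
    and "directed_family X \<F>"
    and "\<forall>F\<in>\<F>. finite F \<and> F \<noteq> {} \<and> F \<subseteq> topspace X"
    and "x \<in> U"
    and "weakly_irreducibly_open X U"
    and "(\<Inter>F\<in>\<F>. upset X F) \<subseteq> upset X {x}"
  shows "\<exists>F\<in>\<F>. F \<subseteq> U"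
proof (rule ccontr)
  assume "\<not> (\<exists>F\<in>\<F>. F \<subseteq> U)"
  then have "\<forall>F\<in>\<F>. finite (F - U) \<and> F - U \<noteq> {} \<and> F - U \<subseteq> topspace X"
    using assms(3) by auto
  then obtain A where A: "closedin X A" and meet: "\<forall>F\<in>\<F>. A \<inter> (F - U) \<noteq> {}"
    and min: "\<And>B. closedin X B \<Longrightarrow> B \<subseteq> A \<Longrightarrow> \<forall>F\<in>\<F>. B \<inter> (F - U) \<noteq> {} \<Longrightarrow> B = A"
    by (rule exists_minimal_closedin_meeting_finite_sets[where K = "\<lambda>F. F - U"]) (rule that)
  have U: "openin X U"
    using assms(5) by (simp add: weakly_irreducibly_open_def)
  have "A - U = A"
  proof (rule min)
    show "closedin X (A - U)"
      using A U by (rule closedin_diff)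
    show "\<forall>F\<in>\<F>. (A - U) \<inter> (F - U) \<noteq> {}"
      using meet by blast
  qed blast
  then have disjoint: "A \<inter> U = {}"
    by blast
  have "upper_bounds X A \<subseteq> upset X F" if "F \<in> \<F>" for F
    using meet that by (intro upper_bounds_subset_upset) blast
  then have "upper_bounds X A \<subseteq> upset X {x}"
    using assms(6) by blast
  then have "x \<in> delta_set X A \<inter> U"
    using assms(4) openin_subset[OF U] by (auto simp: mem_delta_set_iff)
  moreover have "irreducible_set X A"
    using irreducible_minimal_closedin_meeting_diff[OF U assms(2) A meet min] .
  ultimately show False
    using assms(5) disjoint unfolding weakly_irreducibly_open_def by blast
qed

end
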